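(* Let $q\ge0$. For every $X\in\mathcal{X}_{k,q+1}$, \[ \|X(T)\|_H^2+\sum_{i=0}^{N-1}\int_{I_i}\big\|A^{\frac12}\Pi_i^{(q)}X(s)-A^{-\frac12}\dot X(s)\big\|_H^2\,\mathrm{d}s=|X|_{\mathcal{X}_{k,q+1}}^2 , \] where \[ |X|_{\mathcal{X}_{k,q+1}}^2=\|X(0)\|_H^2+\sum_{i=0}^{N-1}\int_{I_i}\Big(\|A^{\frac12}\Pi_i^{(q)}X\|_H^2+\|A^{-\frac12}\dot X\|_H^2\Big)\,\mathrm{d}s . \]
   Context: Let $V\hookrightarrow H\hookrightarrow V^*$ be a Gelfand triple of real separable Hilbert spaces, with $V$ densely embedded in $H$. Let $A:V\to V^*$ be the operator associated with a symmetric, bounded, coercive bilinear form on $V$, with fractional powers defined as usual. For $\gamma\in\mathbb{R}$, $\dot H^\gamma=D(A^{\gamma/2})$ with norm $\|A^{\gamma/2}\cdot\|_H$, so $\dot H^1=V$ and $\dot H^{-1}=V^*$ with equivalent norms. Let $0=t_0<t_1<\dots<t_N=T$, $I_i=[t_i,t_{i+1}]$. Let $\mathcal{X}_{k,q+1}$ be the set of $X\in L^2((0,T);V)\cap H^1((0,T);V^* )$ (hence continuous into $H$) whose restriction to each $I_i$ is a polynomial in $t$ of degree at most $q+1$ with coefficients in $\dot H^1$. On $I_i$, $\Pi_i^{(q)}$ denotes the $L^2(I_i)$-orthogonal projection onto polynomials in $t$ of degree at most $q$. *)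

theory Defs
  imports "HOL-Analysis.Analysis"
begin

text \<open>The operator A is encoded through B = A^(-1/2) restricted to H: a bounded,
  self-adjoint, positive, injective operator on H with dense range.
  Then V = Hdot^1 = range B, A^(1/2) = inverse of B on range B,
  and A^(-1/2) acts on Hdot^1 as B.\<close>

definition frac_scale :: "('h::{real_inner,complete_space} \<Rightarrow> 'h) \<Rightarrow> bool" where
  "frac_scale B \<longleftrightarrow> bounded_linear B \<and> (\<forall>x y. B x \<bullet> y = x \<bullet> B y)
     \<and> (\<forall>x. 0 \<le> B x \<bullet> x) \<and> inj B \<and> closure (range B) = UNIV"

definition Hdot1 :: "('h::real_inner \<Rightarrow> 'h) \<Rightarrow> 'h set" where
  "Hdot1 B = range B"

definition A_half :: "('h::real_inner \<Rightarrow> 'h) \<Rightarrow> 'h \<Rightarrow> 'h" where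
  "A_half B = inv B"

definition A_mhalf :: "('h::real_inner \<Rightarrow> 'h) \<Rightarrow> 'h \<Rightarrow> 'h" where
  "A_mhalf B = B"

definition polys :: "nat \<Rightarrow> (real \<Rightarrow> 'h::real_vector) set" where
  "polys q = {P. \<exists>c. P = (\<lambda>s. \<Sum>j\<le>q. s ^ j *\<^sub>R c j)}"

definition L2proj :: "real \<Rightarrow> real \<Rightarrow> nat \<Rightarrow> (real \<Rightarrow> 'h::real_inner) \<Rightarrow> real \<Rightarrow> 'h" where
  "L2proj a b q f = (THE P. P \<in> polys q \<and>
      (\<forall>Q\<in>polys q. integral {a..b} (\<lambda>s. (f s - P s) \<bullet> Q s) = 0))"

definition time_partition :: "(nat \<Rightarrow> real) \<Rightarrow> nat \<Rightarrow> real \<Rightarrow> bool" where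
  "time_partition t N T \<longleftrightarrow> t 0 = 0 \<and> t N = T \<and> (\<forall>i<N. t i < t (Suc i))"

text \<open>The space X_{k,q+1}: on each closed I_i, X is a polynomial of degree
  at most q+1 with coefficients in Hdot^1.  Since X is a single function and
  the closed intervals share their endpoints, X is continuous into H
  (equivalently, X is in L2(V) \<inter> H1(V*)).\<close>
definition Xspace :: "('h::real_inner \<Rightarrow> 'h) \<Rightarrow> (nat \<Rightarrow> real) \<Rightarrow> nat \<Rightarrow> nat \<Rightarrow> (real \<Rightarrow> 'h) set" where
  "Xspace B t N q = {X. \<exists>c. \<forall>i<N. (\<forall>j. c i j \<in> Hdot1 B) \<and>
      (\<forall>s\<in>{t i..t (Suc i)}. X s = (\<Sum>j\<le>q+1. s ^ j *\<^sub>R c i j))}"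

definition Xdot :: "(nat \<Rightarrow> real) \<Rightarrow> nat \<Rightarrow> (real \<Rightarrow> 'h::real_normed_vector) \<Rightarrow> real \<Rightarrow> 'h" where
  "Xdot t i X s = vector_derivative X (at s within {t i..t (Suc i)})"

definition Pi_q :: "(nat \<Rightarrow> real) \<Rightarrow> nat \<Rightarrow> nat \<Rightarrow> (real \<Rightarrow> 'h::real_inner) \<Rightarrow> real \<Rightarrow> 'h" where
  "Pi_q t q i X = L2proj (t i) (t (Suc i)) q X"

definition Xseminorm_sq :: "('h::real_inner \<Rightarrow> 'h) \<Rightarrow> (nat \<Rightarrow> real) \<Rightarrow> nat \<Rightarrow> nat \<Rightarrow> (real \<Rightarrow> 'h) \<Rightarrow> real" where
  "Xseminorm_sq B t N q X = (norm (X 0))\<^sup>2 + (\<Sum>i<N. integral {t i..t (Suc i)}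
      (\<lambda>s. (norm (A_half B (Pi_q t q i X s)))\<^sup>2 + (norm (A_mhalf B (Xdot t i X s)))\<^sup>2))"

end

theory Submission
  imports Defs
begin

text \<open>On each interval the coefficients of X lie in range B, so X = B \<circ> Y with Y a polynomial of
  degree at most q+1.  The L2 projection onto polynomials of degree at most q acts coefficientwise
  with scalar weights (the projections of the monomials, obtained by Gram--Schmidt induction on q),
  hence commutes with B, and A^(1/2) \<Pi> X = \<Pi> Y.  Self-adjointness of B turns the cross term
  (\<Pi> Y, B X') into (\<Pi> X, X'); as X' has degree at most q this equals (X, X'), whose
  integral over the interval is half the increment of the squared norm of X.  Expanding the square
  and telescoping over the intervals gives the identity.\<close>

lemma polysI: "(\<And>s. P s = (\<Sum>j\<le>q. s ^ j *\<^sub>R c j)) \<Longrightarrow> P \<in> polys q"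
  unfolding polys_def by auto

lemma polysE:
  assumes "P \<in> polys q"
  obtains c where "\<And>s. P s = (\<Sum>j\<le>q. s ^ j *\<^sub>R c j)"
  using assms unfolding polys_def by auto

lemma polys_continuous:
  fixes P :: "real \<Rightarrow> 'a::real_normed_vector"
  shows "P \<in> polys q \<Longrightarrow> continuous_on S P"
  unfolding polys_def by (auto intro!: continuous_intros)

lemma polys_zero: "(\<lambda>_. 0) \<in> polys q"
  by (rule polysI[where c="\<lambda>_. 0"]) simp

lemma monomial_in_polys: "n \<le> q \<Longrightarrow> (\<lambda>s. s ^ n *\<^sub>R x) \<in> polys q"
  by (rule polysI[where c="\<lambda>j. if j = n then x else 0"]) (simp add: if_distrib cong: if_cong)

lemma polys_add: "P \<in> polys q \<Longrightarrow> Q \<in> polys q \<Longrightarrow> (\<lambda>s. P s + Q s) \<in> polys q"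
  by (elim polysE, rule polysI[where c="\<lambda>j. _ j + _ j"]) (simp add: sum.distrib scaleR_add_right)

lemma polys_diff: "P \<in> polys q \<Longrightarrow> Q \<in> polys q \<Longrightarrow> (\<lambda>s. P s - Q s) \<in> polys q"
  by (elim polysE, rule polysI[where c="\<lambda>j. _ j - _ j"]) (simp add: sum_subtractf scaleR_diff_right)

lemma polys_sum: "finite K \<Longrightarrow> (\<And>k. k \<in> K \<Longrightarrow> P k \<in> polys q) \<Longrightarrow> (\<lambda>s. \<Sum>k\<in>K. P k s) \<in> polys q"
  by (induction K rule: finite_induct) (auto intro: polys_zero polys_add)

lemma polys_linear_image: "linear f \<Longrightarrow> P \<in> polys q \<Longrightarrow> (\<lambda>s. f (P s)) \<in> polys q"
  by (elim polysE, rule polysI[where c="\<lambda>j. f (_ j)"]) (simp add: linear_sum linear_scale)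

lemma polys_scaleR_const:
  fixes p :: "real \<Rightarrow> real"
  shows "p \<in> polys q \<Longrightarrow> (\<lambda>s. p s *\<^sub>R x) \<in> polys q"
  by (elim polysE, rule polysI[where c="\<lambda>j. _ j *\<^sub>R x"]) (simp add: scaleR_sum_left)

lemma polys_inner_left: "P \<in> polys q \<Longrightarrow> (\<lambda>s. x \<bullet> P s) \<in> polys q"
  by (elim polysE, rule polysI[where c="\<lambda>j. x \<bullet> _ j"]) (simp add: inner_sum_right)

lemma polys_mono: "n \<le> q \<Longrightarrow> P \<in> polys n \<Longrightarrow> P \<in> polys q"
  unfolding polys_def[of n] by (auto intro!: polys_sum monomial_in_polys)

lemma polys_Suc_decomp:
  assumes "Q \<in> polys (Suc q)"
  obtains Q0 c where "Q0 \<in> polys q" and "\<And>s. Q s = Q0 s + s ^ Suc q *\<^sub>R c"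
proof -
  obtain c where "\<And>s. Q s = (\<Sum>j\<le>Suc q. s ^ j *\<^sub>R c j)" using polysE[OF assms] by blast
  then have "\<And>s. Q s = (\<Sum>j\<le>q. s ^ j *\<^sub>R c j) + s ^ Suc q *\<^sub>R c (Suc q)" by simp
  then show thesis by (rule that[OF polysI, OF refl])
qed

lemma polys_eq_0_on_interval:
  fixes P :: "real \<Rightarrow> 'a::real_inner" and a b :: real
  assumes "P \<in> polys q" "a < b" "\<forall>s\<in>{a..b}. P s = 0"
  shows "P s = 0"
proof -
  obtain c where P: "\<And>s. P s = (\<Sum>j\<le>q. s ^ j *\<^sub>R c j)" using polysE[OF assms(1)] by blast
  have "c i = 0" if "i \<le> q" for i
  proof -
    have "{a..b} \<subseteq> {s. (\<Sum>j\<le>q. (c j \<bullet> c i) * s ^ j) = 0}"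
      using assms(3) by (auto simp: P inner_sum_left mult.commute dest!: arg_cong[where f="\<lambda>v. v \<bullet> c i"])
    then have "infinite {s. (\<Sum>j\<le>q. (c j \<bullet> c i) * s ^ j) = 0}"
      using assms(2) infinite_Icc finite_subset by blast
    then show ?thesis using that by (auto simp: polyfun_finite_roots)
  qed
  then show ?thesis by (simp add: P)
qed

lemma monomial_notin_polys: "(\<lambda>s. s ^ Suc q) \<notin> polys q"
proof
  assume "(\<lambda>s::real. s ^ Suc q) \<in> polys q"
  then obtain c :: "nat \<Rightarrow> real" where "\<And>s. s ^ Suc q = (\<Sum>j\<le>q. s ^ j * c j)"
    by (auto elim: polysE)
  then have "\<forall>s. (\<Sum>j\<le>Suc q. (if j = Suc q then 1 else 0) * s ^ j)
                = (\<Sum>j\<le>Suc q. (if j = Suc q then 0 else c j) * s ^ j)"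
    by (simp add: mult.commute)
  then show False unfolding polyfun_eq_coeffs by (metis le_refl zero_neq_one)
qed

lemma polynomial_has_vector_derivative:
  fixes c :: "nat \<Rightarrow> 'a::real_normed_vector"
  shows "((\<lambda>s. \<Sum>j\<le>Suc n. s ^ j *\<^sub>R c j) has_vector_derivative
     (\<Sum>j\<le>n. t ^ j *\<^sub>R (real (Suc j) *\<^sub>R c (Suc j)))) (at t within S)"
proof -
  have "((\<lambda>s. \<Sum>j\<le>Suc n. s ^ j *\<^sub>R c j) has_vector_derivative
     (\<Sum>j\<le>Suc n. (real j * t ^ (j - 1)) *\<^sub>R c j)) (at t within S)"
    by (intro has_vector_derivative_sum)
       (auto intro!: derivative_eq_intros has_vector_derivative_scaleR[where g="\<lambda>_. c _" and g'=0, simplified])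
  also have "(\<Sum>j\<le>Suc n. (real j * t ^ (j - 1)) *\<^sub>R c j) = (\<Sum>j\<le>n. t ^ j *\<^sub>R (real (Suc j) *\<^sub>R c (Suc j)))"
    by (subst sum.atMost_Suc_shift) (simp add: mult.commute)
  finally show ?thesis .
qed

lemma integral_inner_self_eq_0D:
  fixes f :: "real \<Rightarrow> 'a::real_inner"
  assumes "a < b" "continuous_on {a..b} f" "integral {a..b} (\<lambda>s. f s \<bullet> f s) = 0"
  shows "\<forall>s\<in>{a..b}. f s = 0"
proof -
  have "continuous_on (cbox a b) (\<lambda>s. f s \<bullet> f s)"
    using assms(2) by (auto intro: continuous_intros)
  then have "\<forall>s\<in>cbox a b. f s \<bullet> f s = 0"
    using integral_cbox_eq_0_iff[of a b "\<lambda>s. f s \<bullet> f s"] assms(1,3) by simp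
  then show ?thesis by simp
qed

definition is_L2proj :: "real \<Rightarrow> real \<Rightarrow> nat \<Rightarrow> (real \<Rightarrow> 'h::real_inner) \<Rightarrow> (real \<Rightarrow> 'h) \<Rightarrow> bool" where
  "is_L2proj a b q f P \<longleftrightarrow> P \<in> polys q \<and> (\<forall>Q\<in>polys q. integral {a..b} (\<lambda>s. (f s - P s) \<bullet> Q s) = 0)"

lemma is_L2proj_unique:
  fixes f :: "real \<Rightarrow> 'a::real_inner"
  assumes "a < b" "continuous_on {a..b} f" "is_L2proj a b q f P1" "is_L2proj a b q f P2"
  shows "P1 = P2"
proof -
  define D where "D s = P1 s - P2 s" for s
  have P: "P1 \<in> polys q" "P2 \<in> polys q" and D: "D \<in> polys q"
    using assms(3,4) polys_diff unfolding is_L2proj_def D_def by blast+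
  have cont: "continuous_on {a..b} P1" "continuous_on {a..b} P2" "continuous_on {a..b} D"
    using P D by (auto intro: polys_continuous)
  have "integral {a..b} (\<lambda>s. D s \<bullet> D s)
      = integral {a..b} (\<lambda>s. (f s - P2 s) \<bullet> D s - (f s - P1 s) \<bullet> D s)"
    by (simp add: D_def inner_diff_left)
  also have "\<dots> = integral {a..b} (\<lambda>s. (f s - P2 s) \<bullet> D s) - integral {a..b} (\<lambda>s. (f s - P1 s) \<bullet> D s)"
    by (intro integral_diff integrable_continuous_interval continuous_intros assms(2) cont)
  also have "\<dots> = 0" using assms(3,4) D unfolding is_L2proj_def by simp
  finally have "\<forall>s\<in>{a..b}. D s = 0"
    using integral_inner_self_eq_0D[OF assms(1) cont(3)] by blast
  then show ?thesis using polys_eq_0_on_interval[OF D assms(1)] by (auto simp: D_def)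
qed

lemma L2proj_eqI:
  fixes f :: "real \<Rightarrow> 'a::real_inner"
  assumes "a < b" "continuous_on {a..b} f" "is_L2proj a b q f P"
  shows "L2proj a b q f = P"
  unfolding L2proj_def is_L2proj_def[symmetric]
  using assms is_L2proj_unique by (intro the_equality) blast+

lemma continuous_has_integral_integral:
  fixes f :: "real \<Rightarrow> 'a::banach"
  shows "continuous_on {a..b} f \<Longrightarrow> (f has_integral integral {a..b} f) {a..b}"
  by (intro integrable_integral integrable_continuous_interval)

lemma is_L2proj_0:
  fixes f :: "real \<Rightarrow> real"
  assumes "a < b" "continuous_on {a..b} f"
  shows "is_L2proj a b 0 f (\<lambda>_. integral {a..b} f / (b - a))"
  unfolding is_L2proj_def
proof (intro conjI ballI)
  define \<mu> where "\<mu> = integral {a..b} f / (b - a)"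
  show "(\<lambda>_. \<mu>) \<in> polys 0" by (rule polysI[where c="\<lambda>_. \<mu>"]) simp
  fix Q :: "real \<Rightarrow> real"
  assume "Q \<in> polys 0"
  then obtain c where Q: "\<And>s. Q s = c" by (auto elim: polysE)
  have "((\<lambda>s. (f s - \<mu>) * c) has_integral (integral {a..b} f - \<mu> * (b - a)) * c) {a..b}"
    using assms has_integral_const_real[of \<mu> a b]
    by (intro has_integral_mult_left has_integral_diff continuous_has_integral_integral)
       (simp_all add: mult.commute)
  moreover have "(integral {a..b} f - \<mu> * (b - a)) * c = 0"
    using assms by (simp add: \<mu>_def)
  ultimately have "integral {a..b} (\<lambda>s. (f s - \<mu>) * c) = 0" by (metis integral_unique)
  then show "integral {a..b} (\<lambda>s. (f s - \<mu>) \<bullet> Q s) = 0" by (simp only: Q inner_real_def)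
qed

lemma L2proj_residual_monomial_nonzero:
  assumes "a < b" "is_L2proj a b q (\<lambda>s. s ^ Suc q) p"
  shows "integral {a..b} (\<lambda>s. (s ^ Suc q - p s) * (s ^ Suc q - p s)) \<noteq> 0"
proof
  assume "integral {a..b} (\<lambda>s. (s ^ Suc q - p s) * (s ^ Suc q - p s)) = 0"
  have p: "p \<in> polys q" using assms(2) unfolding is_L2proj_def by blast
  have "(\<lambda>s. s ^ Suc q) \<in> polys (Suc q)"
    using monomial_in_polys[of "Suc q" "Suc q" "1::real"] by simp
  then have r: "(\<lambda>s. s ^ Suc q - p s) \<in> polys (Suc q)"
    using polys_diff polys_mono[OF le_SucI[OF order_refl] p] by blast
  have "\<forall>s\<in>{a..b}. s ^ Suc q - p s = 0"
    using integral_inner_self_eq_0D[OF assms(1) polys_continuous[OF r]]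
      \<open>integral {a..b} _ = 0\<close> unfolding inner_real_def by blast
  then have "(\<lambda>s. s ^ Suc q) = p"
    using polys_eq_0_on_interval[OF r assms(1)] by auto
  then show False using p monomial_notin_polys by metis
qed

text \<open>One Gram--Schmidt step: r is the part of s^(q+1) orthogonal to polys q, and adding the
  component of the residual f - p along r extends the projection from polys q to polys (Suc q).\<close>

lemma is_L2proj_Suc:
  fixes f :: "real \<Rightarrow> real"
  assumes "a < b" "continuous_on {a..b} f"
    and p: "is_L2proj a b q f p" and p': "is_L2proj a b q (\<lambda>s. s ^ Suc q) p'"
  defines "r \<equiv> \<lambda>s. s ^ Suc q - p' s"
  defines "\<mu> \<equiv> integral {a..b} (\<lambda>s. (f s - p s) * r s) / integral {a..b} (\<lambda>s. r s * r s)"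
  shows "is_L2proj a b (Suc q) f (\<lambda>s. p s + \<mu> * r s)"
  unfolding is_L2proj_def
proof (intro conjI ballI)
  define \<nu> where "\<nu> = integral {a..b} (\<lambda>s. r s * r s)"
  have "\<nu> \<noteq> 0" using L2proj_residual_monomial_nonzero[OF assms(1) p'] by (simp add: \<nu>_def r_def)
  have p_polys: "p \<in> polys q" and p'_polys: "p' \<in> polys q" using p p' unfolding is_L2proj_def by blast+
  have "(\<lambda>s. s ^ Suc q) \<in> polys (Suc q)"
    using monomial_in_polys[of "Suc q" "Suc q" "1::real"] by simp
  then have r_polys: "r \<in> polys (Suc q)"
    unfolding r_def using polys_diff polys_mono[OF le_SucI[OF order_refl] p'_polys] by blast
  show "(\<lambda>s. p s + \<mu> * r s) \<in> polys (Suc q)"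
    using polys_add[OF polys_mono[OF _ p_polys] polys_scaleR_const[OF r_polys, of \<mu>]]
    by (simp add: mult.commute)
  fix Q :: "real \<Rightarrow> real"
  assume "Q \<in> polys (Suc q)"
  then obtain Q0 c where "Q0 \<in> polys q" and Q: "\<And>s. Q s = Q0 s + s ^ Suc q *\<^sub>R c"
    using polys_Suc_decomp by blast
  \<comment> \<open>Q = Q1 + c * r, and r as well as the residual of f are orthogonal to Q1 \<in> polys q\<close>
  define Q1 where "Q1 s = Q0 s + c * p' s" for s
  have "Q1 \<in> polys q"
    using polys_add[OF \<open>Q0 \<in> polys q\<close> polys_scaleR_const[OF p'_polys, of c]]
    unfolding Q1_def[abs_def] by (simp add: mult.commute)
  then have orth: "integral {a..b} (\<lambda>s. (f s - p s) * Q1 s) = 0"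
                  "integral {a..b} (\<lambda>s. r s * Q1 s) = 0"
    using p p' by (auto simp: is_L2proj_def r_def)
  have cont: "continuous_on {a..b} p" "continuous_on {a..b} r" "continuous_on {a..b} Q1"
    using p_polys r_polys \<open>Q1 \<in> polys q\<close> by (blast intro: polys_continuous)+
  have cont_pQ1: "continuous_on {a..b} (\<lambda>s. (f s - p s) * Q1 s)"
    and cont_rQ1: "continuous_on {a..b} (\<lambda>s. r s * Q1 s)"
    and cont_pr: "continuous_on {a..b} (\<lambda>s. (f s - p s) * r s)"
    and cont_rr: "continuous_on {a..b} (\<lambda>s. r s * r s)"
    by (intro continuous_intros cont assms(2))+
  have "((\<lambda>s. (f s - p s) * Q1 s - \<mu> * (r s * Q1 s) + c * ((f s - p s) * r s) - c * \<mu> * (r s * r s))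
        has_integral (0 - \<mu> * 0 + c * (\<mu> * \<nu>) - c * \<mu> * \<nu>)) {a..b}"
    using continuous_has_integral_integral[OF cont_pQ1] continuous_has_integral_integral[OF cont_rQ1]
      continuous_has_integral_integral[OF cont_pr] continuous_has_integral_integral[OF cont_rr]
    unfolding orth \<nu>_def[symmetric] \<mu>_def using \<open>\<nu> \<noteq> 0\<close>
    by (intro has_integral_diff has_integral_add has_integral_mult_right) simp_all
  moreover have "(\<lambda>s. (f s - (p s + \<mu> * r s)) \<bullet> Q s)
      = (\<lambda>s. (f s - p s) * Q1 s - \<mu> * (r s * Q1 s) + c * ((f s - p s) * r s) - c * \<mu> * (r s * r s))"
    by (intro ext) (simp only: Q Q1_def r_def inner_real_def real_scaleR_def, algebra)
  ultimately show "integral {a..b} (\<lambda>s. (f s - (p s + \<mu> * r s)) \<bullet> Q s) = 0"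
    by (simp only:) (rule integral_unique, simp)
qed

lemma continuous_has_L2proj:
  fixes f :: "real \<Rightarrow> real"
  assumes "a < b" "continuous_on {a..b} f"
  shows "\<exists>p. is_L2proj a b q f p"
  using assms(2)
proof (induction q arbitrary: f)
  case 0
  then show ?case using is_L2proj_0[OF assms(1)] by blast
next
  case (Suc q)
  have "continuous_on {a..b} (\<lambda>s. s ^ Suc q)" by (intro continuous_intros)
  then obtain p' where p': "is_L2proj a b q (\<lambda>s. s ^ Suc q) p'" using Suc.IH by blast
  obtain p where p: "is_L2proj a b q f p" using Suc.IH[OF Suc.prems] by blast
  show ?case using is_L2proj_Suc[OF assms(1) Suc.prems p p'] by blast
qed

lemma polynomial_has_L2proj:
  fixes a b :: real
  assumes "a < b"
  shows "\<exists>\<pi>. (\<forall>j. \<pi> j \<in> polys q) \<and> (\<forall>x :: nat \<Rightarrow> 'a::real_inner.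
           is_L2proj a b q (\<lambda>s. \<Sum>j\<le>n. s ^ j *\<^sub>R x j) (\<lambda>s. \<Sum>j\<le>n. \<pi> j s *\<^sub>R x j))"
proof -
  have "\<exists>p. is_L2proj a b q (\<lambda>s. s ^ j) p" for j
    by (rule continuous_has_L2proj[OF assms]) (intro continuous_intros)
  then obtain \<pi> where \<pi>: "\<And>j. is_L2proj a b q (\<lambda>s. s ^ j) (\<pi> j)" by metis
  have \<pi>_polys: "\<pi> j \<in> polys q" for j using \<pi> unfolding is_L2proj_def by blast
  have "is_L2proj a b q (\<lambda>s. \<Sum>j\<le>n. s ^ j *\<^sub>R x j) (\<lambda>s. \<Sum>j\<le>n. \<pi> j s *\<^sub>R x j)" for x :: "nat \<Rightarrow> 'a"
    unfolding is_L2proj_def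
  proof (intro conjI ballI)
    show "(\<lambda>s. \<Sum>j\<le>n. \<pi> j s *\<^sub>R x j) \<in> polys q"
      by (intro polys_sum polys_scaleR_const \<pi>_polys) simp
    fix Q :: "real \<Rightarrow> 'a"
    assume Q: "Q \<in> polys q"
    have cont: "continuous_on {a..b} (\<pi> j)" "continuous_on {a..b} (\<lambda>s. x j \<bullet> Q s)" for j
      using \<pi>_polys polys_inner_left[OF Q] by (blast intro: polys_continuous)+
    have "integral {a..b} (\<lambda>s. ((\<Sum>j\<le>n. s ^ j *\<^sub>R x j) - (\<Sum>j\<le>n. \<pi> j s *\<^sub>R x j)) \<bullet> Q s)
        = integral {a..b} (\<lambda>s. \<Sum>j\<le>n. (s ^ j - \<pi> j s) * (x j \<bullet> Q s))"
      by (simp add: sum_subtractf[symmetric] scaleR_diff_left[symmetric] inner_sum_left)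
    also have "\<dots> = (\<Sum>j\<le>n. integral {a..b} (\<lambda>s. (s ^ j - \<pi> j s) * (x j \<bullet> Q s)))"
      by (intro integral_sum integrable_continuous_interval continuous_intros cont) simp
    also have "\<dots> = 0"
      using \<pi> polys_inner_left[OF Q] unfolding is_L2proj_def inner_real_def by simp
    finally show "integral {a..b} (\<lambda>s. ((\<Sum>j\<le>n. s ^ j *\<^sub>R x j) - (\<Sum>j\<le>n. \<pi> j s *\<^sub>R x j)) \<bullet> Q s) = 0" .
  qed
  with \<pi>_polys show ?thesis by blast
qed

lemma has_integral_norm_sq_derivative:
  fixes f :: "real \<Rightarrow> 'a::real_inner"
  assumes "a \<le> b" "\<And>s. s \<in> {a..b} \<Longrightarrow> (f has_vector_derivative f' s) (at s within {a..b})"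
  shows "((\<lambda>s. 2 * (f s \<bullet> f' s)) has_integral (norm (f b))\<^sup>2 - (norm (f a))\<^sup>2) {a..b}"
proof -
  have "((\<lambda>s. f s \<bullet> f' s + f' s \<bullet> f s) has_integral f b \<bullet> f b - f a \<bullet> f a) {a..b}"
    using assms by (intro fundamental_theorem_of_calculus bounded_bilinear.has_vector_derivative[OF bounded_bilinear_inner])
  then show ?thesis by (simp add: inner_commute power2_norm_eq_inner)
qed

lemma polynomial_on_interval_vector_derivative:
  fixes c :: "nat \<Rightarrow> 'a::real_normed_vector"
  assumes "a < b" "\<And>s. s \<in> {a..b} \<Longrightarrow> X s = (\<Sum>j\<le>Suc n. s ^ j *\<^sub>R c j)" "t \<in> {a..b}"
  shows "(X has_vector_derivative (\<Sum>j\<le>n. t ^ j *\<^sub>R (real (Suc j) *\<^sub>R c (Suc j)))) (at t within {a..b})"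
    and "vector_derivative X (at t within {a..b}) = (\<Sum>j\<le>n. t ^ j *\<^sub>R (real (Suc j) *\<^sub>R c (Suc j)))"
proof -
  show deriv: "(X has_vector_derivative (\<Sum>j\<le>n. t ^ j *\<^sub>R (real (Suc j) *\<^sub>R c (Suc j)))) (at t within {a..b})"
    by (rule has_vector_derivative_weaken[OF polynomial_has_vector_derivative assms(3) order_refl])
       (simp add: assms(2))
  show "vector_derivative X (at t within {a..b}) = (\<Sum>j\<le>n. t ^ j *\<^sub>R (real (Suc j) *\<^sub>R c (Suc j)))"
    using vector_derivative_within_cbox[of a b t X] assms(1,3) deriv by simp
qed

lemma L2proj_polynomial_range:
  fixes B :: "'h::real_inner \<Rightarrow> 'h"
  assumes "linear B" "a < b" "\<And>j. c j \<in> range B"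
    and X: "\<And>s. s \<in> {a..b} \<Longrightarrow> X s = (\<Sum>j\<le>n. s ^ j *\<^sub>R c j)"
  obtains U where "U \<in> polys q" "is_L2proj a b q X (\<lambda>s. B (U s))" "L2proj a b q X = (\<lambda>s. B (U s))"
proof -
  define y where "y j = inv B (c j)" for j
  have y: "c j = B (y j)" for j using assms(3)[of j] by (simp add: y_def f_inv_into_f)
  obtain \<pi> where \<pi>_polys: "\<And>j. \<pi> j \<in> polys q" and \<pi>: "\<And>x :: nat \<Rightarrow> 'h.
      is_L2proj a b q (\<lambda>s. \<Sum>j\<le>n. s ^ j *\<^sub>R x j) (\<lambda>s. \<Sum>j\<le>n. \<pi> j s *\<^sub>R x j)"
    using polynomial_has_L2proj[OF \<open>a < b\<close>] by blast
  define U where "U s = (\<Sum>j\<le>n. \<pi> j s *\<^sub>R y j)" for s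
  have "U \<in> polys q" unfolding U_def[abs_def]
    by (intro polys_sum polys_scaleR_const \<pi>_polys) simp
  have B_U: "B (U s) = (\<Sum>j\<le>n. \<pi> j s *\<^sub>R c j)" for s
    by (simp only: U_def y linear_sum[OF assms(1)] linear_scale[OF assms(1)])
  have "is_L2proj a b q (\<lambda>s. \<Sum>j\<le>n. s ^ j *\<^sub>R c j) (\<lambda>s. B (U s))"
    unfolding B_U by (rule \<pi>)
  moreover have "integral {a..b} (\<lambda>s. (X s - B (U s)) \<bullet> Q s)
      = integral {a..b} (\<lambda>s. ((\<Sum>j\<le>n. s ^ j *\<^sub>R c j) - B (U s)) \<bullet> Q s)" for Q
    by (rule integral_cong) (simp add: X)
  ultimately have proj: "is_L2proj a b q X (\<lambda>s. B (U s))" unfolding is_L2proj_def by simp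
  have "continuous_on {a..b} X"
    by (rule continuous_on_eq[OF _ X[symmetric]]) (intro continuous_intros)
  then have "L2proj a b q X = (\<lambda>s. B (U s))" using L2proj_eqI[OF \<open>a < b\<close> _ proj] by blast
  with \<open>U \<in> polys q\<close> proj show thesis by (rule that)
qed

lemma norm_diff_selfadjoint_sq:
  assumes "\<And>x y. B x \<bullet> y = x \<bullet> B y"
  shows "(norm (u - B d))\<^sup>2 = (norm u)\<^sup>2 + (norm (B d))\<^sup>2 - 2 * (B u \<bullet> d)"
proof -
  have "u \<bullet> B d = B u \<bullet> d" using assms[of u d] by simp
  then show ?thesis by (simp add: power2_norm_eq_inner inner_diff_left inner_diff_right inner_commute)
qed

lemma interval_energy_identity:
  fixes B :: "'h::real_inner \<Rightarrow> 'h" and c :: "nat \<Rightarrow> 'h"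
  assumes B: "linear B" "\<And>x y. B x \<bullet> y = x \<bullet> B y" "inj B"
    and "a < b" and c: "\<And>j. c j \<in> range B"
    and X: "\<And>s. s \<in> {a..b} \<Longrightarrow> X s = (\<Sum>j\<le>Suc q. s ^ j *\<^sub>R c j)"
  shows "integral {a..b} (\<lambda>s. (norm (A_half B (L2proj a b q X s)
            - A_mhalf B (vector_derivative X (at s within {a..b}))))\<^sup>2)
       = integral {a..b} (\<lambda>s. (norm (A_half B (L2proj a b q X s)))\<^sup>2
            + (norm (A_mhalf B (vector_derivative X (at s within {a..b}))))\<^sup>2)
         - ((norm (X b))\<^sup>2 - (norm (X a))\<^sup>2)"
proof -
  obtain U where U: "U \<in> polys q" and proj: "is_L2proj a b q X (\<lambda>s. B (U s))"
    and L2proj_X: "L2proj a b q X = (\<lambda>s. B (U s))"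
    using L2proj_polynomial_range[OF B(1) \<open>a < b\<close> c X] .
  have A_half_proj: "A_half B (L2proj a b q X s) = U s" for s
    by (simp add: L2proj_X A_half_def B(3))
  define D where "D s = (\<Sum>j\<le>q. s ^ j *\<^sub>R (real (Suc j) *\<^sub>R c (Suc j)))" for s
  have D: "D \<in> polys q" by (rule polysI, unfold D_def, rule refl)
  have X_deriv: "\<And>s. s \<in> {a..b} \<Longrightarrow> (X has_vector_derivative D s) (at s within {a..b})"
    and Xdot: "\<And>s. s \<in> {a..b} \<Longrightarrow> A_mhalf B (vector_derivative X (at s within {a..b})) = B (D s)"
    using polynomial_on_interval_vector_derivative[OF \<open>a < b\<close> X] by (simp_all add: D_def A_mhalf_def)
  have "continuous_on {a..b} X"
    by (rule continuous_on_eq[OF _ X[symmetric]]) (intro continuous_intros)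
  moreover have "continuous_on {a..b} U" "continuous_on {a..b} (\<lambda>s. B (U s))"
    "continuous_on {a..b} D" "continuous_on {a..b} (\<lambda>s. B (D s))"
    using U D by (auto intro: polys_continuous polys_linear_image[OF B(1)])
  ultimately have cont_F: "continuous_on {a..b} (\<lambda>s. (norm (U s))\<^sup>2 + (norm (B (D s)))\<^sup>2)"
    and cont_orth: "continuous_on {a..b} (\<lambda>s. (X s - B (U s)) \<bullet> D s)"
    by (auto intro!: continuous_intros)
  have orth: "((\<lambda>s. (X s - B (U s)) \<bullet> D s) has_integral 0) {a..b}"
    using proj D continuous_has_integral_integral[OF cont_orth] unfolding is_L2proj_def by metis
  have energy: "((\<lambda>s. 2 * (X s \<bullet> D s)) has_integral (norm (X b))\<^sup>2 - (norm (X a))\<^sup>2) {a..b}"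
    using \<open>a < b\<close> X_deriv by (intro has_integral_norm_sq_derivative) auto
  have "integral {a..b} (\<lambda>s. (norm (A_half B (L2proj a b q X s)
            - A_mhalf B (vector_derivative X (at s within {a..b}))))\<^sup>2)
      = integral {a..b} (\<lambda>s. ((norm (U s))\<^sup>2 + (norm (B (D s)))\<^sup>2) - 2 * (X s \<bullet> D s)
            + 2 * ((X s - B (U s)) \<bullet> D s))"
    by (rule integral_cong)
       (simp add: A_half_proj Xdot norm_diff_selfadjoint_sq[OF B(2)] inner_diff_left)
  also have "\<dots> = integral {a..b} (\<lambda>s. (norm (U s))\<^sup>2 + (norm (B (D s)))\<^sup>2)
      - ((norm (X b))\<^sup>2 - (norm (X a))\<^sup>2) + 2 * 0"
    by (intro integral_unique has_integral_add has_integral_diff has_integral_mult_right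
        continuous_has_integral_integral[OF cont_F] energy orth)
  also have "integral {a..b} (\<lambda>s. (norm (U s))\<^sup>2 + (norm (B (D s)))\<^sup>2)
      = integral {a..b} (\<lambda>s. (norm (A_half B (L2proj a b q X s)))\<^sup>2
            + (norm (A_mhalf B (vector_derivative X (at s within {a..b}))))\<^sup>2)"
    by (rule integral_cong) (simp add: A_half_proj Xdot)
  finally show ?thesis by simp
qed

theorem lemma5p1:
  fixes B :: "'h::{real_inner,complete_space,second_countable_topology} \<Rightarrow> 'h"
    and t :: "nat \<Rightarrow> real" and N :: nat and T :: real and q :: nat
    and X :: "real \<Rightarrow> 'h"
  assumes "frac_scale B"
    and "time_partition t N T"
    and "X \<in> Xspace B t N q"
  shows "(norm (X T))\<^sup>2 + (\<Sum>i<N. integral {t i..t (Suc i)}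
            (\<lambda>s. (norm (A_half B (Pi_q t q i X s) - A_mhalf B (Xdot t i X s)))\<^sup>2))
         = Xseminorm_sq B t N q X"
proof -
  have B: "linear B" "\<And>x y. B x \<bullet> y = x \<bullet> B y" "inj B"
    using assms(1) unfolding frac_scale_def by (auto intro: bounded_linear.linear)
  have t0: "t 0 = 0" and tN: "t N = T" and t_less: "\<And>i. i < N \<Longrightarrow> t i < t (Suc i)"
    using assms(2) unfolding time_partition_def by auto
  obtain c where c: "\<And>i j. i < N \<Longrightarrow> c i j \<in> range B"
    and X: "\<And>i s. i < N \<Longrightarrow> s \<in> {t i..t (Suc i)} \<Longrightarrow> X s = (\<Sum>j\<le>Suc q. s ^ j *\<^sub>R c i j)"
    using assms(3) unfolding Xspace_def Hdot1_def Suc_eq_plus1 by blast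
  define E where "E i = integral {t i..t (Suc i)}
      (\<lambda>s. (norm (A_half B (Pi_q t q i X s)))\<^sup>2 + (norm (A_mhalf B (Xdot t i X s)))\<^sup>2)" for i
  have "integral {t i..t (Suc i)} (\<lambda>s. (norm (A_half B (Pi_q t q i X s) - A_mhalf B (Xdot t i X s)))\<^sup>2)
      = E i - ((norm (X (t (Suc i))))\<^sup>2 - (norm (X (t i)))\<^sup>2)" if "i < N" for i
    unfolding E_def Pi_q_def Xdot_def using that by (intro interval_energy_identity[OF B t_less c X])
  then have "(\<Sum>i<N. integral {t i..t (Suc i)}
            (\<lambda>s. (norm (A_half B (Pi_q t q i X s) - A_mhalf B (Xdot t i X s)))\<^sup>2))
      = (\<Sum>i<N. E i) - (\<Sum>i<N. (norm (X (t (Suc i))))\<^sup>2 - (norm (X (t i)))\<^sup>2)"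
    by (simp add: sum_subtractf)
  also have "(\<Sum>i<N. (norm (X (t (Suc i))))\<^sup>2 - (norm (X (t i)))\<^sup>2) = (norm (X T))\<^sup>2 - (norm (X 0))\<^sup>2"
    using sum_lessThan_telescope[of "\<lambda>i. (norm (X (t i)))\<^sup>2" N] by (simp add: t0 tN)
  finally show ?thesis unfolding Xseminorm_sq_def E_def by simp
qed

end
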